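(* Let $\hat\Omega$ be a compact set with connected interior containing $0$ and equal to the closure of its interior, $\mathcal{T}=\{\sigma_i\}_{i=1}^{m_{\mathcal{T}}}$ a triangulation of $\hat\Omega$, $f:\hat\Omega\to\mathbb{R}^n$, $G:\hat\Omega\to\mathbb{R}^{n\times m}$ continuous and $\mathcal{C}^2$ on each simplex, $\mathbb{I}_1\subseteq\mathbb{Z}_1^{m_{\mathcal{T}}}$ the index set defined in the context, and $\beta_i,\hat g_i,c_{i,j}$ as in the context. Let $\mathbf{y}=[\mathbf{W},\hat{\mathbf{L}},b_2,\hat u]$, with $\mathbf{W}=\{W_x\}_{x\in\mathbb{E}_{\mathcal{T}}}$ and $\hat{\mathbf{L}}=\{\hat l_i\}\subset\mathbb{R}^n$, be a feasible point of system (B): $\hat u>0$; $W_x>0$ for all $x\in\mathbb{E}_{\mathcal{T}}$; $|\nabla W_i|\le\hat l_i$ componentwise for all $i$; $f(x_{i,j})^\intercal\nabla W_i+(1_n^\intercal\hat l_i)(\beta_ic_{i,j}+\hat g_i\hat u)\le -b_2$ for all $i\in\mathbb{I}_1$, $j\in\mathbb{Z}_0^n$. Let $J$ be a cost function and consider minimizing $J(\mathbf{y}+\delta\mathbf{y})$ over $\delta\mathbf{y}=[\delta\mathbf{W},\delta\hat{\mathbf{L}},\delta b_2,\delta\hat u]$ subject to: $\hat u+\delta\hat u>0$; $W_x+\delta W_x>0$ for all $x\in\mathbb{E}_{\mathcal{T}}$; $|\nabla W_i+\delta\nabla W_i|\le\hat l_i+\delta\hat l_i$ componentwise for all $i$,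 with $\delta\nabla W_i=X_i^{-1}\delta\bar W_i$; and $Q_{i,j}\preceq0$ for all $i\in\mathbb{I}_1$, $j\in\mathbb{Z}_0^n$, where $$Q_{i,j}=\begin{bmatrix}\varphi_{i,j}+b_2+\delta b_2 & 1_n^\intercal\delta\hat l_i & \hat g_i\delta\hat u\\ 1_n^\intercal\delta\hat l_i & -2 & 0\\ \hat g_i\delta\hat u & 0 & -2\end{bmatrix},$$ $\varphi_{i,j}=f(x_{i,j})^\intercal(\nabla W_i+\delta\nabla W_i)+1_n^\intercal(\hat l_i+\delta\hat l_i)(\beta_ic_{i,j}+\hat g_i\hat u)+1_n^\intercal\hat l_i\,\hat g_i\,\delta\hat u$. Then for every feasible $\delta\mathbf{y}$ of this problem, $\mathbf{y}+\delta\mathbf{y}$ is a feasible point of (B); and if $\delta\mathbf{y}^\ast$ is an optimal solution, then $J(\mathbf{y}+\delta\mathbf{y}^\ast)\le J(\mathbf{y})$.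
   Context: A triangulation is a finite collection of $n$-simplexes $\sigma_i=\mathrm{co}(\{x_{i,j}\}_{j=0}^n)$ (affinely independent vertices) covering the set, pairwise meeting in common faces or not at all; $\mathbb{E}_{\mathcal{T}}$ is its vertex set; $x_{i,0}=0$ whenever $0\in\sigma_i$. A set $\mathcal{A}_1\subset\hat\Omega$ (compact, connected interior containing $0$, closure of its interior) whose boundary lies in the union of simplex boundaries is given, and $\mathbb{I}_1=\{i:\sigma_i\not\subseteq\mathcal{A}_1\}$. Constants: $\beta_i\ge\max_{p,q,r}\max_{\xi\in\sigma_i}|\partial^2 f^{(p)}/\partial x^{(q)}\partial x^{(r)}(\xi)|$; $\hat g_i=\max_{x\in\sigma_i}\|G(x)\|_\infty$ (induced $\infty$-norm); $c_{i,j}=\tfrac n2\|x_{i,j}-x_{i,0}\|_2(\max_{k\in\mathbb{Z}_1^n}\|x_{i,k}-x_{i,0}\|_2+\|x_{i,j}-x_{i,0}\|_2)$. $X_i$ has rows $(x_{i,j}-x_{i,0})^\intercal$; $\bar W_i$ (resp. $\delta\bar W_i$) has entries $W_{x_{i,j}}-W_{x_{i,0}}$ (resp. with $\delta W$); $\nabla W_i=X_i^{-1}\bar W_i$. $1_n$ is the all-ones vector, $|v|$ componentwise absolute value, $\preceq0$ negative semidefinite. *)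

theory Defs
  imports "HOL-Analysis.Analysis"
begin

text \<open>Vertices of simplex_of i: x i None = x_{i,0}, x i (Some k) = x_{i,k} for k in the
  n-element index type 'n (so j ranges over Z_0^n as 'n option).\<close>

definition simplex_of :: "(nat \<Rightarrow> 'n::finite option \<Rightarrow> real^'n) \<Rightarrow> nat \<Rightarrow> (real^'n) set" where
  "simplex_of x i = convex hull (range (x i))"

definition vertex_set :: "nat \<Rightarrow> (nat \<Rightarrow> 'n::finite option \<Rightarrow> real^'n) \<Rightarrow> (real^'n) set" where
  "vertex_set m x = (\<Union>i\<in>{1..m}. range (x i))"

definition triangulation :: "(real^'n::finite) set \<Rightarrow> nat \<Rightarrow> (nat \<Rightarrow> 'n option \<Rightarrow> real^'n) \<Rightarrow> bool" where
  "triangulation \<Omega> m x \<longleftrightarrow>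
     (\<forall>i\<in>{1..m}. inj (x i) \<and> \<not> affine_dependent (range (x i))) \<and>
     (\<Union>i\<in>{1..m}. simplex_of x i) = \<Omega> \<and>
     (\<forall>i\<in>{1..m}. \<forall>k\<in>{1..m}. i \<noteq> k \<longrightarrow> range (x i) \<noteq> range (x k)) \<and>
     (\<forall>i\<in>{1..m}. \<forall>k\<in>{1..m}.
        simplex_of x i \<inter> simplex_of x k = convex hull (range (x i) \<inter> range (x k))) \<and>
     (\<forall>i\<in>{1..m}. 0 \<in> simplex_of x i \<longrightarrow> x i None = 0)"

definition C2_witness :: "(real^'n::finite \<Rightarrow> 'b::real_normed_vector) \<Rightarrow> (real^'n) set
    \<Rightarrow> ((real^'n) \<Rightarrow> ((real^'n) \<Rightarrow>\<^sub>L 'b)) \<Rightarrow> ((real^'n) \<Rightarrow> ((real^'n) \<Rightarrow>\<^sub>L ((real^'n) \<Rightarrow>\<^sub>L 'b))) \<Rightarrow> bool" where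
  "C2_witness g S Dg D2g \<longleftrightarrow>
     (\<forall>y\<in>S. (g has_derivative blinfun_apply (Dg y)) (at y within S) \<and>
            (Dg has_derivative blinfun_apply (D2g y)) (at y within S)) \<and>
     continuous_on S D2g"

definition C2_on :: "(real^'n::finite) set \<Rightarrow> (real^'n \<Rightarrow> 'b::real_normed_vector) \<Rightarrow> bool" where
  "C2_on S g \<longleftrightarrow> (\<exists>Dg D2g. C2_witness g S Dg D2g)"

definition inf_norm :: "real^'m::finite^'n::finite \<Rightarrow> real" where
  "inf_norm M = Max (range (\<lambda>p. \<Sum>q\<in>UNIV. \<bar>M $ p $ q\<bar>))"

definition ones_dot :: "real^'n::finite \<Rightarrow> real" where
  "ones_dot v = (\<Sum>k\<in>UNIV. v $ k)"

definition Xmat :: "(nat \<Rightarrow> 'n::finite option \<Rightarrow> real^'n) \<Rightarrow> nat \<Rightarrow> real^'n^'n" where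
  "Xmat x i = (\<chi> k. x i (Some k) - x i None)"

definition Wbar :: "(nat \<Rightarrow> 'n::finite option \<Rightarrow> real^'n) \<Rightarrow> (real^'n \<Rightarrow> real) \<Rightarrow> nat \<Rightarrow> real^'n" where
  "Wbar x W i = (\<chi> k. W (x i (Some k)) - W (x i None))"

definition grad :: "(nat \<Rightarrow> 'n::finite option \<Rightarrow> real^'n) \<Rightarrow> (real^'n \<Rightarrow> real) \<Rightarrow> nat \<Rightarrow> real^'n" where
  "grad x W i = matrix_inv (Xmat x i) *v Wbar x W i"

definition neg_semidef :: "real^'k::finite^'k \<Rightarrow> bool" where
  "neg_semidef Q \<longleftrightarrow> (\<forall>v. v \<bullet> (Q *v v) \<le> 0)"

definition feasible_B ::
  "nat \<Rightarrow> (nat \<Rightarrow> 'n::finite option \<Rightarrow> real^'n) \<Rightarrow> nat set \<Rightarrow> (real^'n \<Rightarrow> real^'n)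
   \<Rightarrow> (nat \<Rightarrow> real) \<Rightarrow> (nat \<Rightarrow> real) \<Rightarrow> (nat \<Rightarrow> 'n option \<Rightarrow> real)
   \<Rightarrow> (real^'n \<Rightarrow> real) \<Rightarrow> (nat \<Rightarrow> real^'n) \<Rightarrow> real \<Rightarrow> real \<Rightarrow> bool" where
  "feasible_B m x I1 f \<beta> g c W l b2 u \<longleftrightarrow>
     u > 0 \<and>
     (\<forall>y\<in>vertex_set m x. W y > 0) \<and>
     (\<forall>i\<in>{1..m}. \<forall>k. \<bar>grad x W i $ k\<bar> \<le> l i $ k) \<and>
     (\<forall>i\<in>I1. \<forall>j. f (x i j) \<bullet> grad x W i + ones_dot (l i) * (\<beta> i * c i j + g i * u) \<le> - b2)"

definition Qmat ::
  "(nat \<Rightarrow> 'n::finite option \<Rightarrow> real^'n) \<Rightarrow> (real^'n \<Rightarrow> real^'n)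
   \<Rightarrow> (nat \<Rightarrow> real) \<Rightarrow> (nat \<Rightarrow> real) \<Rightarrow> (nat \<Rightarrow> 'n option \<Rightarrow> real)
   \<Rightarrow> (real^'n \<Rightarrow> real) \<Rightarrow> (nat \<Rightarrow> real^'n) \<Rightarrow> real \<Rightarrow> real
   \<Rightarrow> (real^'n \<Rightarrow> real) \<Rightarrow> (nat \<Rightarrow> real^'n) \<Rightarrow> real \<Rightarrow> real
   \<Rightarrow> nat \<Rightarrow> 'n option \<Rightarrow> real^3^3" where
  "Qmat x f \<beta> g c W l b2 u dW dl db2 du i j =
     (let \<phi> = f (x i j) \<bullet> (grad x W i + grad x dW i)
              + ones_dot (l i + dl i) * (\<beta> i * c i j + g i * u)
              + ones_dot (l i) * g i * du
      in vector [vector [\<phi> + b2 + db2, ones_dot (dl i), g i * du],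
                 vector [ones_dot (dl i), -2, 0],
                 vector [g i * du, 0, -2]])"

definition feasible_delta ::
  "nat \<Rightarrow> (nat \<Rightarrow> 'n::finite option \<Rightarrow> real^'n) \<Rightarrow> nat set \<Rightarrow> (real^'n \<Rightarrow> real^'n)
   \<Rightarrow> (nat \<Rightarrow> real) \<Rightarrow> (nat \<Rightarrow> real) \<Rightarrow> (nat \<Rightarrow> 'n option \<Rightarrow> real)
   \<Rightarrow> (real^'n \<Rightarrow> real) \<Rightarrow> (nat \<Rightarrow> real^'n) \<Rightarrow> real \<Rightarrow> real
   \<Rightarrow> (real^'n \<Rightarrow> real) \<Rightarrow> (nat \<Rightarrow> real^'n) \<Rightarrow> real \<Rightarrow> real \<Rightarrow> bool" where
  "feasible_delta m x I1 f \<beta> g c W l b2 u dW dl db2 du \<longleftrightarrow>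
     u + du > 0 \<and>
     (\<forall>y\<in>vertex_set m x. W y + dW y > 0) \<and>
     (\<forall>i\<in>{1..m}. \<forall>k. \<bar>(grad x W i + grad x dW i) $ k\<bar> \<le> (l i + dl i) $ k) \<and>
     (\<forall>i\<in>I1. \<forall>j. neg_semidef (Qmat x f \<beta> g c W l b2 u dW dl db2 du i j))"

end

theory Submission imports Defs begin

text \<open>The theorem is purely algebraic. Taking the Schur complement of the \<open>-2 I\<close> block,
  \<open>Q\<^sub>i\<^sub>,\<^sub>j \<preceq> 0\<close> is equivalent to \<open>\<phi>\<^sub>i\<^sub>,\<^sub>j + b\<^sub>2 + \<delta>b\<^sub>2 + (s\<^sup>2 + t\<^sup>2) / 2 \<le> 0\<close> with
  \<open>s = 1\<^sup>T \<delta>l\<^sub>i\<close> and \<open>t = g\<^sub>i \<delta>u\<close>. Since \<open>s t \<le> (s\<^sup>2 + t\<^sup>2) / 2\<close> and \<open>\<phi>\<^sub>i\<^sub>,\<^sub>j + s t\<close> is exactly the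
  left-hand side of the decrease condition of (B) at \<open>y + \<delta>y\<close>, every feasible increment yields
  a feasible point of (B). Conversely \<open>\<delta>y = 0\<close> is feasible, so an optimal increment cannot
  increase the cost.\<close>

abbreviation arrow_matrix3 :: "real \<Rightarrow> real \<Rightarrow> real \<Rightarrow> real^3^3" where
  "arrow_matrix3 P s t \<equiv> vector [vector [P, s, t], vector [s, -2, 0], vector [t, 0, -2]]"

lemma arrow_matrix3_quadratic_form:
  "v \<bullet> (arrow_matrix3 P s t *v v)
     = (P + (s\<^sup>2 + t\<^sup>2) / 2) * (v$1)\<^sup>2 - 2 * (v$2 - s * v$1 / 2)\<^sup>2 - 2 * (v$3 - t * v$1 / 2)\<^sup>2"
  by (simp add: inner_vec_def matrix_vector_mult_def sum_3 power2_eq_square field_simps)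

lemma neg_semidef_arrow_matrix3_iff:
  "neg_semidef (arrow_matrix3 P s t) \<longleftrightarrow> P + (s\<^sup>2 + t\<^sup>2) / 2 \<le> 0"
proof
  assume "neg_semidef (arrow_matrix3 P s t)"
  then have "vector [1, s / 2, t / 2] \<bullet> (arrow_matrix3 P s t *v vector [1, s / 2, t / 2]) \<le> 0"
    unfolding neg_semidef_def by blast
  then show "P + (s\<^sup>2 + t\<^sup>2) / 2 \<le> 0"
    unfolding arrow_matrix3_quadratic_form by simp
next
  assume "P + (s\<^sup>2 + t\<^sup>2) / 2 \<le> 0"
  then show "neg_semidef (arrow_matrix3 P s t)"
    unfolding neg_semidef_def arrow_matrix3_quadratic_form
    by (smt (verit) mult_nonpos_nonneg zero_le_power2)
qed

lemma neg_semidef_arrow_matrix3_imp: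
  assumes "neg_semidef (arrow_matrix3 P s t)"
  shows "P + s * t \<le> 0"
proof -
  have "s * t \<le> (s\<^sup>2 + t\<^sup>2) / 2"
    using sum_squares_bound[of s t] by simp
  with assms show ?thesis
    unfolding neg_semidef_arrow_matrix3_iff by linarith
qed

lemma Wbar_add: "Wbar x (\<lambda>y. W y + dW y) i = Wbar x W i + Wbar x dW i"
  unfolding Wbar_def by (simp add: vec_eq_iff)

lemma grad_add: "grad x (\<lambda>y. W y + dW y) i = grad x W i + grad x dW i"
  unfolding grad_def Wbar_add by (simp add: matrix_vector_right_distrib)

lemma grad_zero [simp]: "grad x (\<lambda>y. 0) i = 0"
  unfolding grad_def Wbar_def by (simp add: vec_eq_iff matrix_vector_mult_def)

lemma ones_dot_add: "ones_dot (a + b) = ones_dot a + ones_dot b"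
  unfolding ones_dot_def by (simp add: sum.distrib)

lemma ones_dot_zero [simp]: "ones_dot 0 = 0"
  unfolding ones_dot_def by simp

lemma feasible_B_add_if_feasible_delta:
  assumes "feasible_delta m x I1 f \<beta> g c W l b2 u dW dl db2 du"
  shows "feasible_B m x I1 f \<beta> g c (\<lambda>y. W y + dW y) (\<lambda>i. l i + dl i) (b2 + db2) (u + du)"
proof -
  have "f (x i j) \<bullet> (grad x W i + grad x dW i)
          + ones_dot (l i + dl i) * (\<beta> i * c i j + g i * (u + du)) \<le> - (b2 + db2)"
    if "i \<in> I1" for i j
  proof -
    have "neg_semidef (Qmat x f \<beta> g c W l b2 u dW dl db2 du i j)"
      using assms that unfolding feasible_delta_def by blast
    then have "f (x i j) \<bullet> (grad x W i + grad x dW i)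
              + ones_dot (l i + dl i) * (\<beta> i * c i j + g i * u)
              + ones_dot (l i) * g i * du + b2 + db2 + ones_dot (dl i) * (g i * du) \<le> 0"
      unfolding Qmat_def Let_def by (rule neg_semidef_arrow_matrix3_imp)
    then show ?thesis
      by (simp add: ones_dot_add algebra_simps)
  qed
  with assms show ?thesis
    unfolding feasible_B_def feasible_delta_def grad_add by blast
qed

lemma feasible_delta_zero:
  assumes "feasible_B m x I1 f \<beta> g c W l b2 u"
  shows "feasible_delta m x I1 f \<beta> g c W l b2 u (\<lambda>y. 0) (\<lambda>i. 0) 0 0"
proof -
  have "neg_semidef (Qmat x f \<beta> g c W l b2 u (\<lambda>y. 0) (\<lambda>i. 0) 0 0 i j)" if "i \<in> I1" for i j
  proof -
    have "f (x i j) \<bullet> grad x W i + ones_dot (l i) * (\<beta> i * c i j + g i * u) \<le> - b2"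
      using assms that unfolding feasible_B_def by blast
    then show ?thesis
      unfolding Qmat_def Let_def by (simp add: neg_semidef_arrow_matrix3_iff)
  qed
  with assms show ?thesis
    unfolding feasible_B_def feasible_delta_def by simp
qed

theorem theorem5:
  fixes \<Omega> A1 :: "(real^'n::finite) set"
    and m :: nat
    and x :: "nat \<Rightarrow> 'n option \<Rightarrow> real^'n"
    and f :: "real^'n \<Rightarrow> real^'n"
    and G :: "real^'n \<Rightarrow> real^'m::finite^'n"
    and I1 :: "nat set"
    and \<beta> g :: "nat \<Rightarrow> real"
    and c :: "nat \<Rightarrow> 'n option \<Rightarrow> real"
    and W :: "real^'n \<Rightarrow> real" and l :: "nat \<Rightarrow> real^'n" and b2 u :: real
    and J :: "(real^'n \<Rightarrow> real) \<Rightarrow> (nat \<Rightarrow> real^'n) \<Rightarrow> real \<Rightarrow> real \<Rightarrow> real"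
    and dWs :: "real^'n \<Rightarrow> real" and dls :: "nat \<Rightarrow> real^'n" and db2s dus :: real
  assumes Omega: "compact \<Omega>" "connected (interior \<Omega>)" "0 \<in> interior \<Omega>"
      "closure (interior \<Omega>) = \<Omega>"
    and tri: "triangulation \<Omega> m x"
    and A1: "A1 \<subseteq> \<Omega>" "compact A1" "connected (interior A1)" "0 \<in> interior A1"
      "closure (interior A1) = A1"
      "frontier A1 \<subseteq> (\<Union>i\<in>{1..m}. frontier (simplex_of x i))"
    and I1_def: "I1 = {i\<in>{1..m}. \<not> simplex_of x i \<subseteq> A1}"
    and f_cont: "continuous_on \<Omega> f" and G_cont: "continuous_on \<Omega> G"
    and f_C2: "\<forall>i\<in>{1..m}. C2_on (simplex_of x i) f"
    and G_C2: "\<forall>i\<in>{1..m}. C2_on (simplex_of x i) G"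
    and beta: "\<forall>i\<in>{1..m}. \<forall>Df D2f. C2_witness f (simplex_of x i) Df D2f \<longrightarrow>
       (\<forall>\<xi>\<in>simplex_of x i. \<forall>p q r.
          \<bar>blinfun_apply (blinfun_apply (D2f \<xi>) (axis q 1)) (axis r 1) $ p\<bar> \<le> \<beta> i)"
    and g_def: "\<forall>i\<in>{1..m}. g i = (SUP y\<in>simplex_of x i. inf_norm (G y))"
    and c_def: "\<forall>i\<in>{1..m}. \<forall>j. c i j = real CARD('n) / 2 * norm (x i j - x i None) *
       (Max (range (\<lambda>k. norm (x i (Some k) - x i None))) + norm (x i j - x i None))"
    and feasB: "feasible_B m x I1 f \<beta> g c W l b2 u"
  shows "(\<forall>dW dl db2 du. feasible_delta m x I1 f \<beta> g c W l b2 u dW dl db2 du \<longrightarrow>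
            feasible_B m x I1 f \<beta> g c (\<lambda>y. W y + dW y) (\<lambda>i. l i + dl i) (b2 + db2) (u + du))
       \<and> ((feasible_delta m x I1 f \<beta> g c W l b2 u dWs dls db2s dus \<and>
           (\<forall>dW dl db2 du. feasible_delta m x I1 f \<beta> g c W l b2 u dW dl db2 du \<longrightarrow>
              J (\<lambda>y. W y + dWs y) (\<lambda>i. l i + dls i) (b2 + db2s) (u + dus)
                \<le> J (\<lambda>y. W y + dW y) (\<lambda>i. l i + dl i) (b2 + db2) (u + du)))
          \<longrightarrow> J (\<lambda>y. W y + dWs y) (\<lambda>i. l i + dls i) (b2 + db2s) (u + dus) \<le> J W l b2 u)"
proof (intro conjI allI impI)
  fix dW dl db2 du
  assume "feasible_delta m x I1 f \<beta> g c W l b2 u dW dl db2 du"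
  then show "feasible_B m x I1 f \<beta> g c (\<lambda>y. W y + dW y) (\<lambda>i. l i + dl i) (b2 + db2) (u + du)"
    by (rule feasible_B_add_if_feasible_delta)
next
  assume "feasible_delta m x I1 f \<beta> g c W l b2 u dWs dls db2s dus \<and>
           (\<forall>dW dl db2 du. feasible_delta m x I1 f \<beta> g c W l b2 u dW dl db2 du \<longrightarrow>
              J (\<lambda>y. W y + dWs y) (\<lambda>i. l i + dls i) (b2 + db2s) (u + dus)
                \<le> J (\<lambda>y. W y + dW y) (\<lambda>i. l i + dl i) (b2 + db2) (u + du))"
  with feasible_delta_zero[OF feasB]
  show "J (\<lambda>y. W y + dWs y) (\<lambda>i. l i + dls i) (b2 + db2s) (u + dus) \<le> J W l b2 u"
    by fastforce
qed

end
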